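(* Fix $M\in\mathbb{N}$, $M\ge3$, and let $\lambda(j)=j\frac{4+j^2}{1+j^2}$. Call an $n$-uple $\{j_1,\dots,j_n\}\subset\mathbb{Z}\setminus\{0\}$, with $n\le M$, an $M$-resonance of order $n$ if $$\sum_{i=1}^nj_i=0,\qquad\sum_{i=1}^n\lambda(j_i)=0,\qquad\sum_{i=1}^n(1+j_i^2)^2j_i^{2(r-2)}\lambda(j_i)=0\quad\forall r=2,\dots,M+1.$$ Then all $M$-resonances are trivial: there are no $M$-resonances of odd order, and the ones of even order are, up to permutations, of the form $(i,-i,j,-j,k,-k,p,-p,\dots)$. *)

theory Defs
  imports Complex_Main "HOL-Library.Multiset"
begin

definition lam :: "int \<Rightarrow> real" where
  "lam j = real_of_int j * (4 + (real_of_int j)^2) / (1 + (real_of_int j)^2)"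

definition M_resonance :: "nat \<Rightarrow> int list \<Rightarrow> bool" where
  "M_resonance M js \<longleftrightarrow>
     length js \<le> M \<and>
     (\<forall>j\<in>set js. j \<noteq> 0) \<and>
     sum_list js = 0 \<and>
     (\<Sum>j\<leftarrow>js. lam j) = 0 \<and>
     (\<forall>r\<in>{2..M+1}.
        (\<Sum>j\<leftarrow>js. (1 + (real_of_int j)^2)^2 * (real_of_int j)^(2*(r-2)) * lam j) = 0)"

definition trivial_resonance :: "int list \<Rightarrow> bool" where
  "trivial_resonance js \<longleftrightarrow>
     (\<exists>ks. mset js = mset (concat (map (\<lambda>k. [k, -k]) ks)))"

end

theory Submission
  imports Defs "HOL-Computational_Algebra.Polynomial"
begin

text \<open>Since (1 + j^2)^2 lam j = j (1 + j^2)(4 + j^2), the conditions of index r say that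
  the weights w(j) = j (1 + j^2)(4 + j^2) have vanishing moments against (j^2)^i for all
  i < M, hence against every polynomial p(j^2) of degree < M.  A resonance has at most M
  entries, so at most M distinct squares occur, and the product of (X - j^2) over all
  squares other than a^2 isolates the entries a and -a: their total weight
  a (1 + a^2)(4 + a^2) (#a - #(-a)) vanishes.\<close>

lemma sum_list_poly_eq_0_if_moments_eq_0:
  fixes u v :: "'a \<Rightarrow> real" and q :: "real poly"
  assumes "\<And>i. i < N \<Longrightarrow> (\<Sum>j\<leftarrow>js. u j * v j ^ i) = 0"
    and "degree q < N"
  shows "(\<Sum>j\<leftarrow>js. u j * poly q (v j)) = 0"
proof -
  have "(\<Sum>j\<leftarrow>js. u j * poly q (v j)) = (\<Sum>j\<leftarrow>js. \<Sum>i\<le>degree q. coeff q i * (u j * v j ^ i))"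
    by (simp add: poly_altdef sum_distrib_left mult_ac)
  also have "\<dots> = (\<Sum>i\<le>degree q. coeff q i * (\<Sum>j\<leftarrow>js. u j * v j ^ i))"
    by (induction js) (simp_all add: sum.distrib distrib_left)
  also have "\<dots> = 0"
    using assms by (intro sum.neutral) auto
  finally show ?thesis .
qed

lemma sum_list_fibre_eq_0:
  fixes u v :: "'a \<Rightarrow> real"
  assumes card: "card (v ` set js) \<le> N"
    and orth: "\<And>q :: real poly. degree q < N \<Longrightarrow> (\<Sum>j\<leftarrow>js. u j * poly q (v j)) = 0"
  shows "(\<Sum>j\<leftarrow>filter (\<lambda>j. v j = y) js. u j) = 0"
proof (cases "y \<in> v ` set js")
  case False
  then have "filter (\<lambda>j. v j = y) js = []"
    by (auto simp: filter_empty_conv)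
  then show ?thesis by simp
next
  case True
  define Y where "Y = v ` set js - {y}"
  define q :: "real poly" where "q = (\<Prod>z\<in>Y. [:-z, 1:])"
  have fin: "finite Y" unfolding Y_def by simp
  have "degree q \<le> card Y"
    unfolding q_def using degree_prod_sum_le[OF fin, of "\<lambda>z. [:-z, 1:]"] by simp
  also have "card Y < N"
    using card True card_gt_0_iff[of "v ` set js"] unfolding Y_def by auto
  finally have "(\<Sum>j\<leftarrow>js. u j * poly q (v j)) = 0"
    by (rule orth)
  moreover have "poly q (v j) = 0" if "j \<in> set js" "v j \<noteq> y" for j
    using that fin unfolding q_def Y_def by (auto simp: poly_prod)
  then have "(\<Sum>j\<leftarrow>js. u j * poly q (v j)) = (\<Sum>j\<leftarrow>js. if v j = y then u j * poly q y else 0)"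
    by (intro arg_cong[where f = sum_list] map_cong) auto
  also have "\<dots> = (\<Sum>j\<leftarrow>filter (\<lambda>j. v j = y) js. u j) * poly q y"
    by (induction js) (simp_all add: distrib_right)
  moreover have "poly q y \<noteq> 0"
    using fin unfolding q_def Y_def by (simp add: poly_prod)
  ultimately show ?thesis
    by simp
qed

lemma sum_list_filter_square_eq:
  fixes a :: int
  shows "(\<Sum>j\<leftarrow>filter (\<lambda>j. (real_of_int j)\<^sup>2 = (real_of_int a)\<^sup>2) js. real_of_int j)
       = real_of_int a * (real (count (mset js) a) - real (count (mset js) (-a)))"
proof (induction js)
  case (Cons j js)
  have "(real_of_int j)\<^sup>2 = (real_of_int a)\<^sup>2 \<longleftrightarrow> j = a \<or> j = -a"
    by (metis of_int_eq_iff of_int_minus power2_eq_iff)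
  with Cons show ?case
    by (cases "a = 0") (auto simp: algebra_simps)
qed simp

lemma lam_resonance_term_eq:
  fixes j :: int and k :: nat
  defines "x \<equiv> real_of_int j"
  shows "(1 + x\<^sup>2)\<^sup>2 * x ^ (2 * k) * lam j = x * (1 + x\<^sup>2) * (4 + x\<^sup>2) * (x\<^sup>2) ^ k"
proof -
  have "1 + x\<^sup>2 \<noteq> 0"
    by (metis add_pos_nonneg zero_less_one zero_le_power2 less_irrefl)
  then show ?thesis
    by (simp add: lam_def x_def power_mult field_simps power2_eq_square)
qed

lemma M_resonance_moments_eq_0:
  assumes "M_resonance M js" "i < M"
  shows "(\<Sum>j\<leftarrow>js. real_of_int j * (1 + (real_of_int j)\<^sup>2) * (4 + (real_of_int j)\<^sup>2)
            * ((real_of_int j)\<^sup>2) ^ i) = 0"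
proof -
  have "i + 2 \<in> {2..M+1}" using assms(2) by simp
  with assms(1) have "(\<Sum>j\<leftarrow>js. (1 + (real_of_int j)\<^sup>2)\<^sup>2 * (real_of_int j) ^ (2 * i) * lam j) = 0"
    unfolding M_resonance_def by fastforce
  then show ?thesis
    by (simp add: lam_resonance_term_eq)
qed

lemma M_resonance_count_uminus_eq:
  assumes res: "M_resonance M js"
  shows "count (mset js) (-a) = count (mset js) a"
proof -
  define w :: "int \<Rightarrow> real" where
    "w j = real_of_int j * (1 + (real_of_int j)\<^sup>2) * (4 + (real_of_int j)\<^sup>2)" for j
  define v :: "int \<Rightarrow> real" where "v j = (real_of_int j)\<^sup>2" for j
  have "card (v ` set js) \<le> M"
    using card_image_le[of "set js" v] card_length[of js] res
    unfolding M_resonance_def by simp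
  moreover have "(\<Sum>j\<leftarrow>js. w j * poly q (v j)) = 0" if "degree q < M" for q
    using sum_list_poly_eq_0_if_moments_eq_0[OF M_resonance_moments_eq_0[OF res] that]
    by (simp add: w_def v_def)
  ultimately have "(\<Sum>j\<leftarrow>filter (\<lambda>j. v j = v a) js. w j) = 0"
    by (rule sum_list_fibre_eq_0)
  moreover have "(\<Sum>j\<leftarrow>filter (\<lambda>j. v j = v a) js. w j)
      = (\<Sum>j\<leftarrow>filter (\<lambda>j. v j = v a) js. (1 + v a) * (4 + v a) * real_of_int j)"
    by (intro arg_cong[where f = sum_list] map_cong) (auto simp: w_def v_def)
  ultimately have "(1 + v a) * (4 + v a) * (\<Sum>j\<leftarrow>filter (\<lambda>j. v j = v a) js. real_of_int j) = 0"
    by (simp add: sum_list_const_mult)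
  moreover have "(1 + v a) * (4 + v a) > 0"
    by (simp add: v_def add_pos_nonneg)
  ultimately have "(\<Sum>j\<leftarrow>filter (\<lambda>j. v j = v a) js. real_of_int j) = 0"
    by (metis mult_eq_0_iff order_less_irrefl)
  then have "real_of_int a * (real (count (mset js) a) - real (count (mset js) (-a))) = 0"
    using sum_list_filter_square_eq[of a js] by (simp add: v_def)
  then show ?thesis
    by (cases "a = 0") auto
qed

lemma count_image_mset_uminus:
  fixes A :: "'a::group_add multiset"
  shows "count (image_mset uminus A) x = count A (-x)"
proof -
  have "uminus -` {x} = {-x}"
    by (auto simp: minus_equation_iff)
  then show ?thesis
    by (cases "-x \<in># A") (auto simp: count_image_mset count_eq_zero_iff)
qed

lemma mset_eq_pairs_with_negatives:
  fixes A :: "int multiset"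
  assumes "0 \<notin># A" and "\<And>a. count A (-a) = count A a"
  shows "A = filter_mset (\<lambda>j. j > 0) A + image_mset uminus (filter_mset (\<lambda>j. j > 0) A)"
proof (rule multiset_eqI)
  fix x :: int
  from assms show "count A x = count (filter_mset (\<lambda>j. j > 0) A + image_mset uminus (filter_mset (\<lambda>j. j > 0) A)) x"
    by (cases x "0 :: int" rule: linorder_cases) (auto simp: count_image_mset_uminus count_eq_zero_iff)
qed

lemma mset_concat_pairs:
  "mset (concat (map (\<lambda>k. [k, -k]) ks)) = mset ks + image_mset uminus (mset ks)"
  by (induction ks) auto

theorem proposition3p2:
  fixes M :: nat and js :: "int list"
  assumes "M \<ge> 3"
    and "M_resonance M js"
  shows "even (length js) \<and> trivial_resonance js"
proof -
  define ks where "ks = filter (\<lambda>j. j > 0) js"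
  have "0 \<notin># mset js"
    using assms(2) unfolding M_resonance_def by auto
  then have pairs: "mset js = mset (concat (map (\<lambda>k. [k, -k]) ks))"
    using mset_eq_pairs_with_negatives M_resonance_count_uminus_eq[OF assms(2)]
    unfolding mset_concat_pairs ks_def by (metis mset_filter)
  then have "length js = 2 * length ks"
    by (metis mset_concat_pairs size_image_mset size_mset size_union mult_2)
  with pairs show ?thesis
    unfolding trivial_resonance_def by auto
qed

end
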